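(* Let $d$ be a premetric with open balls on a topological space $X$. (1) If $\overline d=\overline d^\circ$, then the premetric $\overline d=\overline d^\circ$ is right-continuous. (2) If $d$ is $\overline{\mathsf{dist}}$-continuous, then $\overline d=\overline d^\circ$ and this premetric is right-continuous and $\overline{\mathsf{dist}}$-continuous.
   Context: A premetric on $X$ is $d:X\times X\to[0,\infty)$ with $d(x,x)=0$. $B_d(x,\varepsilon)=\{y:d(x,y)<\varepsilon\}$, $B_d(A,\varepsilon)=\bigcup_{a\in A}B_d(a,\varepsilon)$; $d$ has open balls if every $B_d(x,\varepsilon)$ is open; right-continuous if $y\mapsto d(x,y)$ is continuous for each $x$. For non-empty $A$: $\overline d_A(x)=\inf\{\varepsilon>0:x\in\overline{B_d(A,\varepsilon)}\}$, $\overline d^\circ_A(x)=\inf\{\varepsilon>0:x\in B_d(A,\varepsilon)\cup\mathrm{int}\,\overline{B_d(A,\varepsilon)}\}$; a premetric is $\overline{\mathsf{dist}}$-continuous if $\overline d_A$ is continuous for every non-empty $A$. $\overline d(x,y)=\overline d_{\{x\}}(y)$, $\overline d^\circ(x,y)=\overline d^\circ_{\{x\}}(y)$. *)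

theory Defs
  imports "HOL-Analysis.Analysis"
begin

definition premetric :: "('a \<Rightarrow> 'a \<Rightarrow> real) \<Rightarrow> bool" where
  "premetric d \<longleftrightarrow> (\<forall>x y. 0 \<le> d x y) \<and> (\<forall>x. d x x = 0)"

definition pball :: "('a \<Rightarrow> 'a \<Rightarrow> real) \<Rightarrow> 'a \<Rightarrow> real \<Rightarrow> 'a set" where
  "pball d x e = {y. d x y < e}"

definition pball_set :: "('a \<Rightarrow> 'a \<Rightarrow> real) \<Rightarrow> 'a set \<Rightarrow> real \<Rightarrow> 'a set" where
  "pball_set d A e = (\<Union>a\<in>A. pball d a e)"

definition has_open_balls :: "('a::topological_space \<Rightarrow> 'a \<Rightarrow> real) \<Rightarrow> bool" where
  "has_open_balls d \<longleftrightarrow> (\<forall>x e. open (pball d x e))"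

definition right_continuous :: "('a::topological_space \<Rightarrow> 'a \<Rightarrow> real) \<Rightarrow> bool" where
  "right_continuous d \<longleftrightarrow> (\<forall>x. continuous_on UNIV (d x))"

definition dbar_set :: "('a::topological_space \<Rightarrow> 'a \<Rightarrow> real) \<Rightarrow> 'a set \<Rightarrow> 'a \<Rightarrow> real" where
  "dbar_set d A x = Inf {e. e > 0 \<and> x \<in> closure (pball_set d A e)}"

definition dbar_circ_set :: "('a::topological_space \<Rightarrow> 'a \<Rightarrow> real) \<Rightarrow> 'a set \<Rightarrow> 'a \<Rightarrow> real" where
  "dbar_circ_set d A x =
     Inf {e. e > 0 \<and> x \<in> pball_set d A e \<union> interior (closure (pball_set d A e))}"

definition dist_bar_continuous :: "('a::topological_space \<Rightarrow> 'a \<Rightarrow> real) \<Rightarrow> bool" where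
  "dist_bar_continuous d \<longleftrightarrow> (\<forall>A. A \<noteq> {} \<longrightarrow> continuous_on UNIV (dbar_set d A))"

definition dbar :: "('a::topological_space \<Rightarrow> 'a \<Rightarrow> real) \<Rightarrow> 'a \<Rightarrow> 'a \<Rightarrow> real" where
  "dbar d x y = dbar_set d {x} y"

definition dbar_circ :: "('a::topological_space \<Rightarrow> 'a \<Rightarrow> real) \<Rightarrow> 'a \<Rightarrow> 'a \<Rightarrow> real" where
  "dbar_circ d x y = dbar_circ_set d {x} y"

end

theory Submission
  imports Defs
begin

text \<open>Fix A and write B e for the union of the e-balls around A. The distance
  dbar_set d A x, the infimum of the e with x \<in> closure (B e), is always lower semicontinuous:
  its superlevel set above s contains the open complement of closure (B s). Upper semicontinuity
  at x is exactly what x \<in> B e \<union> interior (closure (B e)) supplies when balls are open, so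
  dbar_set = dbar_circ_set gives continuity. Conversely, if dbar_set d A is continuous, its
  sublevel set below e is an open subset of closure (B e), hence lies in its interior, and the two
  infima agree. Finally d and dbar d have balls with equal closures, so they induce the same
  distance to every set.\<close>

lemma pball_set_singleton [simp]: "pball_set d {a} e = pball d a e"
  unfolding pball_set_def by simp

lemma pball_set_mono: "e \<le> e' \<Longrightarrow> pball_set d A e \<subseteq> pball_set d A e'"
  unfolding pball_set_def pball_def by auto

lemma open_pball_set: "has_open_balls d \<Longrightarrow> open (pball_set d A e)"
  unfolding has_open_balls_def pball_set_def by auto

lemma bdd_below_positive_reals: "bdd_below {e::real. e > 0 \<and> P e}"
  by (rule bdd_belowI[of _ 0]) auto

lemma mem_pball_set_large_radius:
  assumes "a \<in> A" shows "x \<in> pball_set d A (\<bar>d a x\<bar> + 1)"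
  using assms unfolding pball_set_def pball_def by force

lemma dbar_set_radii_nonempty:
  assumes "A \<noteq> {}" shows "{e. e > 0 \<and> x \<in> closure (pball_set d A e)} \<noteq> {}"
proof -
  obtain a where "a \<in> A" using assms by auto
  with mem_pball_set_large_radius closure_subset
  have "\<bar>d a x\<bar> + 1 \<in> {e. e > 0 \<and> x \<in> closure (pball_set d A e)}" by fastforce
  thus ?thesis by blast
qed

lemma dbar_circ_set_radii_nonempty:
  assumes "A \<noteq> {}"
  shows "{e. e > 0 \<and> x \<in> pball_set d A e \<union> interior (closure (pball_set d A e))} \<noteq> {}"
proof -
  obtain a where "a \<in> A" using assms by auto
  with mem_pball_set_large_radius
  have "\<bar>d a x\<bar> + 1 \<in> {e. e > 0 \<and> x \<in> pball_set d A e \<union> interior (closure (pball_set d A e))}"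
    by fastforce
  thus ?thesis by blast
qed

lemma dbar_set_nonneg: "A \<noteq> {} \<Longrightarrow> 0 \<le> dbar_set d A x"
  unfolding dbar_set_def by (rule cInf_greatest[OF dbar_set_radii_nonempty]) auto

lemma dbar_set_le: "e > 0 \<Longrightarrow> x \<in> closure (pball_set d A e) \<Longrightarrow> dbar_set d A x \<le> e"
  unfolding dbar_set_def by (rule cInf_lower) (auto intro: bdd_below_positive_reals)

lemma dbar_set_less_iff:
  assumes "A \<noteq> {}"
  shows "dbar_set d A x < u \<longleftrightarrow> (\<exists>e. e > 0 \<and> e < u \<and> x \<in> closure (pball_set d A e))"
  unfolding dbar_set_def
  using cInf_less_iff[OF dbar_set_radii_nonempty[OF assms] bdd_below_positive_reals] by auto

lemma dbar_circ_set_less_iff: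
  assumes "A \<noteq> {}"
  shows "dbar_circ_set d A x < u \<longleftrightarrow>
    (\<exists>e. e > 0 \<and> e < u \<and> x \<in> pball_set d A e \<union> interior (closure (pball_set d A e)))"
  unfolding dbar_circ_set_def
  using cInf_less_iff[OF dbar_circ_set_radii_nonempty[OF assms] bdd_below_positive_reals] by auto

lemma dbar_set_le_dbar_circ_set:
  assumes "A \<noteq> {}" shows "dbar_set d A x \<le> dbar_circ_set d A x"
  unfolding dbar_set_def dbar_circ_set_def
  by (rule cInf_superset_mono[OF dbar_circ_set_radii_nonempty[OF assms] bdd_below_positive_reals])
     (use closure_subset interior_subset in blast)

lemma le_dbar_set_if_not_in_closure:
  assumes "A \<noteq> {}" and "x \<notin> closure (pball_set d A s)"
  shows "s \<le> dbar_set d A x"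
proof (rule ccontr)
  assume "\<not> s \<le> dbar_set d A x"
  then obtain e where "e < s" "x \<in> closure (pball_set d A e)"
    using dbar_set_less_iff[OF assms(1)] by (meson not_le)
  with closure_mono[OF pball_set_mono[of e s]] assms(2) show False by auto
qed

lemma continuous_on_UNIV_if_open_rays:
  fixes f :: "'a::topological_space \<Rightarrow> real"
  assumes "\<And>l. open {x. l < f x}" and "\<And>u. open {x. f x < u}"
  shows "continuous_on UNIV f"
proof -
  have "(f \<longlongrightarrow> f x) (at x)" for x
    unfolding order_tendsto_iff eventually_at_topological
    using assms by (metis mem_Collect_eq)
  thus ?thesis by (simp add: continuous_on_def)
qed

lemma open_superlevel_dbar_set:
  assumes "A \<noteq> {}" shows "open {x. l < dbar_set d A x}"
proof (rule Topological_Spaces.openI)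
  fix x assume "x \<in> {x. l < dbar_set d A x}"
  then obtain s where s: "l < s" "s < dbar_set d A x" using dense by auto
  show "\<exists>U. open U \<and> x \<in> U \<and> U \<subseteq> {x. l < dbar_set d A x}"
  proof (cases "s > 0")
    case False
    have "l < dbar_set d A y" for y
      using False s dbar_set_nonneg[OF assms, of d y] by linarith
    then show ?thesis by (intro exI[of _ UNIV]) auto
  next
    case True
    with s dbar_set_le have "x \<notin> closure (pball_set d A s)" by fastforce
    with s le_dbar_set_if_not_in_closure[OF assms] show ?thesis
      by (intro exI[of _ "- closure (pball_set d A s)"]) fastforce
  qed
qed

lemma open_sublevel_dbar_set:
  assumes "A \<noteq> {}" and "has_open_balls d" and "\<And>x. dbar_circ_set d A x = dbar_set d A x"
  shows "open {x. dbar_set d A x < u}"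
proof (rule Topological_Spaces.openI)
  fix x assume "x \<in> {x. dbar_set d A x < u}"
  then obtain e where e: "e > 0" "e < u"
    and x: "x \<in> pball_set d A e \<union> interior (closure (pball_set d A e))"
    using assms(3) dbar_circ_set_less_iff[OF assms(1)] by (metis mem_Collect_eq)
  have "pball_set d A e \<union> interior (closure (pball_set d A e)) \<subseteq> closure (pball_set d A e)"
    using closure_subset interior_subset by blast
  with e dbar_set_le[OF e(1)]
  have "pball_set d A e \<union> interior (closure (pball_set d A e)) \<subseteq> {x. dbar_set d A x < u}"
    by fastforce
  with x open_pball_set[OF assms(2)] show "\<exists>U. open U \<and> x \<in> U \<and> U \<subseteq> {x. dbar_set d A x < u}"
    by blast
qed

lemma continuous_on_dbar_set:
  assumes "A \<noteq> {}" and "has_open_balls d" and "\<And>x. dbar_circ_set d A x = dbar_set d A x"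
  shows "continuous_on UNIV (dbar_set d A)"
  using continuous_on_UNIV_if_open_rays open_superlevel_dbar_set[OF assms(1)]
    open_sublevel_dbar_set[OF assms] by blast

lemma dbar_circ_set_eq_dbar_set_if_continuous:
  assumes "A \<noteq> {}" and cont: "continuous_on UNIV (dbar_set d A)"
  shows "dbar_circ_set d A x = dbar_set d A x"
proof (rule antisym[OF dense_ge dbar_set_le_dbar_circ_set[OF assms(1)]])
  fix e assume e: "dbar_set d A x < e"
  let ?U = "{z. dbar_set d A z < e}"
  have "open ?U" using open_Collect_less[OF cont continuous_on_const] by simp
  moreover have "?U \<subseteq> closure (pball_set d A e)"
  proof
    fix z assume "z \<in> ?U"
    then obtain e' where "e' < e" "z \<in> closure (pball_set d A e')"
      using dbar_set_less_iff[OF assms(1)] by blast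
    with closure_mono[OF pball_set_mono[of e' e]] show "z \<in> closure (pball_set d A e)" by auto
  qed
  ultimately have "x \<in> interior (closure (pball_set d A e))"
    using e interior_maximal by blast
  moreover have "e > 0" using e dbar_set_nonneg[OF assms(1), of d x] by linarith
  ultimately show "dbar_circ_set d A x \<le> e"
    unfolding dbar_circ_set_def by (intro cInf_lower bdd_below_positive_reals) auto
qed

lemma dbar_le:
  assumes "premetric d" shows "dbar d x y \<le> d x y"
proof (rule dense_ge)
  fix e assume "d x y < e"
  moreover have "0 \<le> d x y" using assms unfolding premetric_def by simp
  ultimately show "dbar d x y \<le> e"
    unfolding dbar_def
    by (intro dbar_set_le) (auto intro: closure_subset[THEN subsetD] simp: pball_def)
qed

lemma dbar_nonneg: "0 \<le> dbar d x y"
  unfolding dbar_def by (rule dbar_set_nonneg) simp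

lemma premetric_dbar: "premetric d \<Longrightarrow> premetric (dbar d)"
  using dbar_nonneg dbar_le unfolding premetric_def by (metis order_antisym)

lemma pball_set_subset_pball_set_dbar:
  assumes "premetric d" shows "pball_set d A e \<subseteq> pball_set (dbar d) A e"
proof -
  have "pball d a e \<subseteq> pball (dbar d) a e" for a
    using dbar_le[OF assms, of a] unfolding pball_def by (auto intro: le_less_trans)
  then show ?thesis unfolding pball_set_def by blast
qed

lemma pball_set_dbar_subset_closure:
  "pball_set (dbar d) A e \<subseteq> closure (pball_set d A e)"
proof
  fix y assume "y \<in> pball_set (dbar d) A e"
  then obtain a where a: "a \<in> A" "dbar_set d {a} y < e"
    unfolding pball_set_def pball_def dbar_def by auto
  then obtain e' where "e' < e" "y \<in> closure (pball_set d {a} e')"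
    using dbar_set_less_iff[of "{a}"] by blast
  moreover have "pball_set d {a} e' \<subseteq> pball_set d A e"
    using a \<open>e' < e\<close> unfolding pball_set_def pball_def by auto
  ultimately show "y \<in> closure (pball_set d A e)" by (meson closure_mono subsetD)
qed

lemma closure_pball_set_dbar:
  assumes "premetric d"
  shows "closure (pball_set (dbar d) A e) = closure (pball_set d A e)"
  using closure_mono[OF pball_set_subset_pball_set_dbar[OF assms]]
    closure_minimal[OF pball_set_dbar_subset_closure closed_closure] by blast

lemma dbar_set_dbar: "premetric d \<Longrightarrow> dbar_set (dbar d) A = dbar_set d A"
  unfolding dbar_set_def[abs_def] closure_pball_set_dbar by simp

theorem corollary1p6:
  fixes d :: "'a::topological_space \<Rightarrow> 'a \<Rightarrow> real"
  assumes "premetric d" and "has_open_balls d"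
  shows "(dbar d = dbar_circ d \<longrightarrow> premetric (dbar d) \<and> right_continuous (dbar d))
       \<and> (dist_bar_continuous d \<longrightarrow>
            dbar d = dbar_circ d \<and> premetric (dbar d) \<and> right_continuous (dbar d)
            \<and> dist_bar_continuous (dbar d))"
proof -
  have right_cont: "right_continuous (dbar d)" if "dbar d = dbar_circ d"
  proof -
    have "dbar_circ_set d {x} y = dbar_set d {x} y" for x y
      using that by (simp add: dbar_def dbar_circ_def fun_eq_iff)
    then show ?thesis
      unfolding right_continuous_def dbar_def[abs_def]
      using continuous_on_dbar_set[OF _ assms(2)] by simp
  qed
  have circ: "dbar d = dbar_circ d" if "dist_bar_continuous d"
  proof -
    have "dbar_circ_set d {x} y = dbar_set d {x} y" for x y
      using that dbar_circ_set_eq_dbar_set_if_continuous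
      unfolding dist_bar_continuous_def by blast
    then show ?thesis by (simp add: dbar_def dbar_circ_def fun_eq_iff)
  qed
  have "dist_bar_continuous (dbar d)" if "dist_bar_continuous d"
    using that unfolding dist_bar_continuous_def dbar_set_dbar[OF assms(1)] .
  with right_cont circ premetric_dbar[OF assms(1)] show ?thesis by blast
qed

end
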